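(* Let $A$ be an effect on a complex separable Hilbert space $\mathcal{H}$, with spectrum $\sigma_A$, and write $A'=I-A$. Then the operator $AA'$ satisfies: (a) $\mathbb{O}\le AA'\le\tfrac14 I$; (b) $\tfrac14-\max\bigl\{(\|A\|-\tfrac12)^2,(\|A'\|-\tfrac12)^2\bigr\}\le\|AA'\|\le\tfrac14$; (c) $\|AA'\|=\tfrac14$ if and only if $\tfrac12\in\sigma_A$; (d) $\|I-AA'\|=\tfrac34+\max\bigl\{(\|A\|-\tfrac12)^2,(\|A'\|-\tfrac12)^2\bigr\}$.
   Context: An effect is a selfadjoint bounded operator $A$ with $\mathbb{O}\le A\le I$. Norms are operator norms. *)

theory Defs
  imports "HOL-Analysis.Analysis"
begin

text \<open>A complex Hilbert space is modelled on an abelian group type 'h together with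
  a complex scalar multiplication sm and an inner product ip, which is
  conjugate-linear in the first and linear in the second argument.\<close>

definition hnorm :: "('h \<Rightarrow> 'h \<Rightarrow> complex) \<Rightarrow> 'h \<Rightarrow> real" where
  "hnorm ip x = sqrt (Re (ip x x))"

definition complex_inner_product :: "(complex \<Rightarrow> 'h::ab_group_add \<Rightarrow> 'h) \<Rightarrow> ('h \<Rightarrow> 'h \<Rightarrow> complex) \<Rightarrow> bool" where
  "complex_inner_product sm ip \<longleftrightarrow>
     (\<forall>x y z. ip x (y + z) = ip x y + ip x z) \<and>
     (\<forall>c x y. ip x (sm c y) = c * ip x y) \<and>
     (\<forall>x y. ip y x = cnj (ip x y)) \<and>
     (\<forall>x. Im (ip x x) = 0 \<and> Re (ip x x) \<ge> 0) \<and>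
     (\<forall>x. ip x x = 0 \<longrightarrow> x = 0)"

definition hcomplete :: "('h::ab_group_add \<Rightarrow> 'h \<Rightarrow> complex) \<Rightarrow> bool" where
  "hcomplete ip \<longleftrightarrow>
     (\<forall>X :: nat \<Rightarrow> 'h.
        (\<forall>e>0. \<exists>N. \<forall>m\<ge>N. \<forall>n\<ge>N. hnorm ip (X m - X n) < e) \<longrightarrow>
        (\<exists>L. \<forall>e>0. \<exists>N. \<forall>n\<ge>N. hnorm ip (X n - L) < e))"

definition hseparable :: "('h::ab_group_add \<Rightarrow> 'h \<Rightarrow> complex) \<Rightarrow> bool" where
  "hseparable ip \<longleftrightarrow> (\<exists>D. countable D \<and> (\<forall>x. \<forall>e>0. \<exists>d\<in>D. hnorm ip (x - d) < e))"

definition complex_separable_hilbert_space ::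
  "(complex \<Rightarrow> 'h::ab_group_add \<Rightarrow> 'h) \<Rightarrow> ('h \<Rightarrow> 'h \<Rightarrow> complex) \<Rightarrow> bool" where
  "complex_separable_hilbert_space sm ip \<longleftrightarrow>
     vector_space sm \<and> complex_inner_product sm ip \<and> hcomplete ip \<and> hseparable ip"

definition bounded_op :: "(complex \<Rightarrow> 'h::ab_group_add \<Rightarrow> 'h) \<Rightarrow> ('h \<Rightarrow> 'h \<Rightarrow> complex) \<Rightarrow> ('h \<Rightarrow> 'h) \<Rightarrow> bool" where
  "bounded_op sm ip T \<longleftrightarrow>
     (\<forall>x y. T (x + y) = T x + T y) \<and> (\<forall>c x. T (sm c x) = sm c (T x)) \<and>
     (\<exists>K. \<forall>x. hnorm ip (T x) \<le> K * hnorm ip x)"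

definition opnorm :: "('h \<Rightarrow> 'h \<Rightarrow> complex) \<Rightarrow> ('h \<Rightarrow> 'h) \<Rightarrow> real" where
  "opnorm ip T = Sup {hnorm ip (T x) | x. hnorm ip x \<le> 1}"

definition selfadjoint :: "('h \<Rightarrow> 'h \<Rightarrow> complex) \<Rightarrow> ('h \<Rightarrow> 'h) \<Rightarrow> bool" where
  "selfadjoint ip T \<longleftrightarrow> (\<forall>x y. ip (T x) y = ip x (T y))"

definition op_le :: "('h::ab_group_add \<Rightarrow> 'h \<Rightarrow> complex) \<Rightarrow> ('h \<Rightarrow> 'h) \<Rightarrow> ('h \<Rightarrow> 'h) \<Rightarrow> bool" where
  "op_le ip S T \<longleftrightarrow> (\<forall>x. Im (ip x (T x - S x)) = 0 \<and> Re (ip x (T x - S x)) \<ge> 0)"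

definition effect :: "(complex \<Rightarrow> 'h::ab_group_add \<Rightarrow> 'h) \<Rightarrow> ('h \<Rightarrow> 'h \<Rightarrow> complex) \<Rightarrow> ('h \<Rightarrow> 'h) \<Rightarrow> bool" where
  "effect sm ip A \<longleftrightarrow> bounded_op sm ip A \<and> selfadjoint ip A \<and>
     op_le ip (\<lambda>x. 0) A \<and> op_le ip A (\<lambda>x. x)"

definition op_spectrum :: "(complex \<Rightarrow> 'h::ab_group_add \<Rightarrow> 'h) \<Rightarrow> ('h \<Rightarrow> 'h \<Rightarrow> complex) \<Rightarrow> ('h \<Rightarrow> 'h) \<Rightarrow> complex set" where
  "op_spectrum sm ip A = {l. \<not> (\<exists>B. bounded_op sm ip B \<and>
       (\<forall>x. B (A x - sm l x) = x) \<and> (\<forall>x. A (B x) - sm l (B x) = x))}"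

end

theory Submission
  imports Defs
begin

text \<open>Write \<open>A' = I - A\<close> and \<open>B = A - I/2\<close>. Then \<open>B\<^sup>2 = I/4 - AA'\<close>, so the quadratic forms
  of \<open>AA'\<close> and \<open>I - AA'\<close> are \<open>\<parallel>x\<parallel>\<^sup>2/4 - \<parallel>Bx\<parallel>\<^sup>2\<close> and \<open>3\<parallel>x\<parallel>\<^sup>2/4 + \<parallel>Bx\<parallel>\<^sup>2\<close>.
  Since \<open>1 - \<parallel>A'\<parallel> \<le> A \<le> \<parallel>A\<parallel>\<close>, the spectrum of \<open>B\<close> lies in \<open>[1/2 - \<parallel>A'\<parallel>, \<parallel>A\<parallel> - 1/2]\<close>,
  which bounds \<open>\<parallel>Bx\<parallel>\<^sup>2\<close> by the maximum in the statement times \<open>\<parallel>x\<parallel>\<^sup>2\<close>; conversely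
  \<open>\<parallel>Bx\<parallel> \<le> t\<parallel>x\<parallel>\<close> forces \<open>\<parallel>A\<parallel>, \<parallel>A'\<parallel> \<le> 1/2 + t\<close>. As the norm of a positive operator is the
  supremum of its quadratic form on the unit ball, (a), (b) and (d) follow. For (c): if
  \<open>\<parallel>AA'\<parallel> < 1/4\<close> then \<open>B\<^sup>2 = I/4 - AA'\<close> is invertible by a contraction argument, hence so
  is \<open>B\<close>; conversely a bounded inverse of \<open>B\<close> gives \<open>\<parallel>Bx\<parallel> \<ge> \<parallel>x\<parallel>/K\<close>, which pushes
  \<open>\<parallel>AA'\<parallel>\<close> below \<open>1/4\<close>.\<close>

lemma le_of_quadratic_nonneg:
  fixes a c d :: real
  assumes "0 \<le> c" "0 \<le> a" "0 \<le> d" and nonneg: "\<And>t. 0 \<le> a - 2*t*c + t^2*c*d"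
  shows "c \<le> a * d"
proof (cases "c = 0")
  case False
  show ?thesis
  proof (cases "d = 0")
    case True
    have "0 \<le> a - 2*((a+1)/(2*c))*c" using nonneg[of "(a+1)/(2*c)"] True by simp
    also have "\<dots> = -1" using False by (simp add: field_simps)
    finally show ?thesis by simp
  next
    case False
    then have "0 < d" using assms by simp
    have "0 \<le> a - 2*(1/d)*c + (1/d)^2*c*d" using nonneg[of "1/d"] .
    also have "\<dots> = a - c/d" using \<open>0 < d\<close> by (simp add: field_simps power2_eq_square)
    finally show ?thesis using \<open>0 < d\<close> by (simp add: field_simps)
  qed
qed (use assms in simp)

locale complex_inner_space =
  fixes sm :: "complex \<Rightarrow> 'h::ab_group_add \<Rightarrow> 'h" and ip :: "'h \<Rightarrow> 'h \<Rightarrow> complex"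
  assumes is_vector_space: "vector_space sm" and is_inner_product: "complex_inner_product sm ip"
begin

sublocale vector_space sm by (rule is_vector_space)

lemma ip_add_right: "ip x (y + z) = ip x y + ip x z"
  using is_inner_product unfolding complex_inner_product_def by blast
lemma ip_scale_right: "ip x (sm c y) = c * ip x y"
  using is_inner_product unfolding complex_inner_product_def by blast
lemma ip_cnj: "ip y x = cnj (ip x y)"
  using is_inner_product unfolding complex_inner_product_def by blast
lemma ip_self_Im: "Im (ip x x) = 0"
  using is_inner_product unfolding complex_inner_product_def by blast
lemma ip_self_Re_nonneg: "0 \<le> Re (ip x x)"
  using is_inner_product unfolding complex_inner_product_def by blast
lemma ip_self_eq_0: "ip x x = 0 \<Longrightarrow> x = 0"
  using is_inner_product unfolding complex_inner_product_def by blast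

lemma ip_add_left: "ip (x + y) z = ip x z + ip y z"
  by (metis ip_cnj ip_add_right complex_cnj_add)
lemma ip_scale_left: "ip (sm c x) y = cnj c * ip x y"
  by (metis ip_cnj ip_scale_right complex_cnj_mult)
lemma ip_diff_right: "ip x (y - z) = ip x y - ip x z"
  using ip_add_right[of x "y - z" z] by simp
lemma ip_diff_left: "ip (y - z) x = ip y x - ip z x"
  using ip_add_left[of "y - z" z x] by simp
lemma ip_zero_right [simp]: "ip x 0 = 0"
  using ip_diff_right[of x 0 0] by simp
lemma ip_zero_left [simp]: "ip 0 x = 0"
  using ip_diff_left[of 0 0 x] by simp
lemma ip_minus_right: "ip x (- y) = - ip x y"
  using ip_diff_right[of x 0 y] by simp
lemma ip_minus_left: "ip (- y) x = - ip y x"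
  using ip_diff_left[of 0 y x] by simp

lemmas ip_simps = ip_add_right ip_add_left ip_scale_right ip_scale_left
  ip_diff_right ip_diff_left ip_minus_right ip_minus_left

lemma hnorm_nonneg: "0 \<le> hnorm ip x"
  unfolding hnorm_def using ip_self_Re_nonneg by simp
lemma hnorm_sq: "(hnorm ip x)^2 = Re (ip x x)"
  unfolding hnorm_def using ip_self_Re_nonneg by simp
lemma ip_self_eq_hnorm_sq: "ip x x = of_real ((hnorm ip x)^2)"
  using hnorm_sq ip_self_Im by (simp add: complex_eq_iff)
lemma hnorm_zero [simp]: "hnorm ip 0 = 0"
  unfolding hnorm_def by simp
lemma hnorm_eq_0_iff: "hnorm ip x = 0 \<longleftrightarrow> x = 0"
  by (metis hnorm_zero ip_self_eq_0 ip_self_eq_hnorm_sq of_real_0 zero_eq_power2)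
lemma hnorm_pos: "x \<noteq> 0 \<Longrightarrow> 0 < hnorm ip x"
  using hnorm_nonneg hnorm_eq_0_iff by (metis order_le_less)

lemma scale_half_add: "sm (1/2) x + sm (1/2) x = x"
  using scale_left_distrib[of "1/2" "1/2" x, symmetric] by simp

definition linop :: "('h \<Rightarrow> 'h) \<Rightarrow> bool" where
  "linop T \<longleftrightarrow> (\<forall>x y. T (x + y) = T x + T y) \<and> (\<forall>c x. T (sm c x) = sm c (T x))"

lemma linop_add: "linop T \<Longrightarrow> T (x + y) = T x + T y"
  unfolding linop_def by blast
lemma linop_scale: "linop T \<Longrightarrow> T (sm c x) = sm c (T x)"
  unfolding linop_def by blast
lemma linop_diff: "linop T \<Longrightarrow> T (x - y) = T x - T y"
  unfolding linop_def by (metis add_diff_cancel diff_add_cancel)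
lemma linop_zero: "linop T \<Longrightarrow> T 0 = 0"
  using linop_diff[of T 0 0] by simp

lemma linop_id: "linop (\<lambda>x. x)"
  unfolding linop_def by simp
lemma linop_comp: "linop S \<Longrightarrow> linop T \<Longrightarrow> linop (\<lambda>x. S (T x))"
  unfolding linop_def by simp
lemma linop_diff_op: "linop S \<Longrightarrow> linop T \<Longrightarrow> linop (\<lambda>x. S x - T x)"
  unfolding linop_def by (simp add: scale_right_diff_distrib)
lemma linop_scale_op: "linop (\<lambda>x. sm c x)"
  unfolding linop_def by (auto simp: scale_right_distrib intro: scale_left_commute)

lemma bounded_op_iff:
  "bounded_op sm ip T \<longleftrightarrow> linop T \<and> (\<exists>K. \<forall>x. hnorm ip (T x) \<le> K * hnorm ip x)"
  unfolding bounded_op_def linop_def by blast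

definition pos_op :: "('h \<Rightarrow> 'h) \<Rightarrow> bool" where
  "pos_op T \<longleftrightarrow> linop T \<and> selfadjoint ip T \<and> (\<forall>x. 0 \<le> Re (ip x (T x)))"

lemma selfadjoint_ip_self_real: "selfadjoint ip T \<Longrightarrow> ip x (T x) = of_real (Re (ip x (T x)))"
  unfolding selfadjoint_def by (metis ip_cnj Reals_cnj_iff of_real_Re)

lemma op_le_zero_iff_pos_op:
  assumes "linop T" "selfadjoint ip T"
  shows "op_le ip (\<lambda>x. 0) T \<longleftrightarrow> pos_op T"
  using assms selfadjoint_ip_self_real[OF assms(2)] unfolding op_le_def pos_op_def
  by (metis Im_complex_of_real diff_zero)

lemma cauchy_schwarz_pos_op:
  assumes "pos_op Q"
  shows "(cmod (ip x (Q y)))^2 \<le> Re (ip x (Q x)) * Re (ip y (Q y))"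
proof -
  have Q: "linop Q" "\<And>x y. ip (Q x) y = ip x (Q y)" "\<And>x. 0 \<le> Re (ip x (Q x))"
    using assms unfolding pos_op_def selfadjoint_def by auto
  define c where "c = ip x (Q y)"
  have yx: "ip y (Q x) = cnj c" unfolding c_def by (metis Q(2) ip_cnj)
  have cc: "c * cnj c = of_real ((cmod c)^2)"
    using complex_norm_square[of c] by simp
  have "0 \<le> Re (ip x (Q x)) - 2*t*(cmod c)^2 + t^2*(cmod c)^2 * Re (ip y (Q y))" for t :: real
  proof -
    \<comment> \<open>the quadratic form at \<open>x - t c\<^sup>* y\<close>\<close>
    define w where "w = x - sm (of_real t * cnj c) y"
    have "ip w (Q w) = ip x (Q x) - (of_real t * cnj c) * ip x (Q y)
        - cnj (of_real t * cnj c) * ip y (Q x) + cnj (of_real t * cnj c) * ((of_real t * cnj c) * ip y (Q y))"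
      unfolding w_def by (simp add: linop_diff[OF Q(1)] linop_scale[OF Q(1)] ip_simps algebra_simps)
    also have "\<dots> = ip x (Q x) - 2 * of_real t * (c * cnj c) + (of_real t)^2 * (c * cnj c) * ip y (Q y)"
      unfolding yx c_def[symmetric] by (simp add: algebra_simps power2_eq_square)
    finally have "Re (ip w (Q w)) = Re (ip x (Q x)) - 2*t*(cmod c)^2 + t^2*(cmod c)^2 * Re (ip y (Q y))"
      unfolding cc by (simp add: power2_eq_square)
    then show ?thesis using Q(3)[of w] by simp
  qed
  then show ?thesis unfolding c_def[symmetric]
    by (intro le_of_quadratic_nonneg) (use Q(3) in auto)
qed

lemma pos_op_id: "pos_op (\<lambda>x. x)"
  unfolding pos_op_def selfadjoint_def using linop_id ip_self_Re_nonneg by blast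

lemma cauchy_schwarz: "cmod (ip x y) \<le> hnorm ip x * hnorm ip y"
proof -
  have "(cmod (ip x y))^2 \<le> (hnorm ip x * hnorm ip y)^2"
    using cauchy_schwarz_pos_op[OF pos_op_id, of x y] by (simp add: hnorm_sq power_mult_distrib)
  then show ?thesis using hnorm_nonneg by (meson mult_nonneg_nonneg power2_le_imp_le)
qed

lemma Re_ip_le_hnorm_mult: "Re (ip x y) \<le> hnorm ip x * hnorm ip y"
  using cauchy_schwarz complex_Re_le_cmod order_trans by blast

lemma hnorm_scale: "hnorm ip (sm c x) = cmod c * hnorm ip x"
proof -
  have "ip (sm c x) (sm c x) = of_real ((cmod c)^2) * ip x x"
    using complex_norm_square[of c] by (simp add: ip_simps mult.commute)
  then have "(hnorm ip (sm c x))^2 = (cmod c * hnorm ip x)^2"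
    by (simp add: hnorm_sq power_mult_distrib)
  then show ?thesis using hnorm_nonneg by (simp add: power2_eq_iff_nonneg)
qed

lemma hnorm_minus: "hnorm ip (- x) = hnorm ip x"
  using hnorm_scale[of "-1" x] by simp

lemma hnorm_triangle: "hnorm ip (x + y) \<le> hnorm ip x + hnorm ip y"
proof -
  have "ip (x + y) (x + y) = ip x x + ip y y + (ip x y + cnj (ip x y))"
    by (simp add: ip_simps) (metis ip_cnj)
  then have "(hnorm ip (x + y))^2 = (hnorm ip x)^2 + (hnorm ip y)^2 + 2 * Re (ip x y)"
    by (simp add: hnorm_sq)
  also have "\<dots> \<le> (hnorm ip x + hnorm ip y)^2"
    using Re_ip_le_hnorm_mult[of x y] by (simp add: power2_sum)
  finally show ?thesis using hnorm_nonneg by (meson add_nonneg_nonneg power2_le_imp_le)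
qed

lemma hnorm_triangle_diff: "hnorm ip (x - y) \<le> hnorm ip x + hnorm ip y"
  using hnorm_triangle[of x "- y"] by (simp add: hnorm_minus)

lemma hnorm_sq_diff_scale:
  assumes "selfadjoint ip T"
  shows "(hnorm ip (T x - sm (of_real t) x))^2
    = (hnorm ip (T x))^2 - 2 * t * Re (ip x (T x)) + t^2 * (hnorm ip x)^2"
proof -
  have "ip (T x) x = ip x (T x)" using assms unfolding selfadjoint_def by blast
  then have "ip (T x - sm (of_real t) x) (T x - sm (of_real t) x)
      = ip (T x) (T x) - of_real (2 * t) * ip x (T x) + of_real (t^2) * ip x x"
    by (simp add: ip_simps algebra_simps power2_eq_square)
  then show ?thesis by (simp add: hnorm_sq)
qed

lemma opnorm_le_bound:
  assumes bound: "\<And>x. hnorm ip (T x) \<le> K * hnorm ip x" and nontrivial: "\<exists>x::'h. x \<noteq> 0"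
  shows "opnorm ip T \<le> K"
proof -
  obtain x0 :: 'h where "x0 \<noteq> 0" using nontrivial by blast
  then have "0 \<le> K" using bound[of x0] hnorm_pos[of x0] hnorm_nonneg[of "T x0"]
    by (metis order_trans zero_le_mult_iff not_less)
  show ?thesis unfolding opnorm_def
  proof (rule cSup_least)
    show "{hnorm ip (T x) |x. hnorm ip x \<le> 1} \<noteq> {}" by (auto intro: exI[of _ 0])
  next
    fix z assume "z \<in> {hnorm ip (T x) |x. hnorm ip x \<le> 1}"
    then obtain x where "z = hnorm ip (T x)" "hnorm ip x \<le> 1" by blast
    then show "z \<le> K" using bound[of x] \<open>0 \<le> K\<close> by (meson mult_left_le order_trans)
  qed
qed

lemma hnorm_le_opnorm:
  assumes "bounded_op sm ip T"
  shows "hnorm ip (T x) \<le> opnorm ip T * hnorm ip x"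
proof (cases "x = 0")
  case True then show ?thesis using assms by (simp add: bounded_op_iff linop_zero)
next
  case False
  obtain K where K: "\<And>x. hnorm ip (T x) \<le> K * hnorm ip x" and T: "linop T"
    using assms unfolding bounded_op_iff by blast
  define v where "v = hnorm ip x"
  have "0 < v" unfolding v_def using False by (rule hnorm_pos)
  have "0 \<le> K" using K[of x] \<open>0 < v\<close> hnorm_nonneg[of "T x"] unfolding v_def[symmetric]
    by (metis order_trans zero_le_mult_iff not_less)
  define u where "u = sm (of_real (1/v)) x"
  have cmod_v: "cmod (of_real (1/v)) = 1/v" using \<open>0 < v\<close> by (simp only: norm_of_real) simp
  have "hnorm ip u = 1" unfolding u_def hnorm_scale cmod_v using \<open>0 < v\<close> by (simp add: v_def)
  then have "hnorm ip (T u) \<le> opnorm ip T" unfolding opnorm_def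
    using K \<open>0 \<le> K\<close>
    by (intro cSup_upper bdd_aboveI[of _ K]) (auto, meson mult_left_le order_trans)
  moreover have "hnorm ip (T u) = hnorm ip (T x) / v"
    unfolding u_def linop_scale[OF T] hnorm_scale cmod_v using \<open>0 < v\<close> by simp
  ultimately show ?thesis using \<open>0 < v\<close> by (simp add: v_def field_simps)
qed

lemma ip_self_le_opnorm:
  assumes "bounded_op sm ip T"
  shows "Re (ip x (T x)) \<le> opnorm ip T * (hnorm ip x)^2"
proof -
  have "Re (ip x (T x)) \<le> hnorm ip x * hnorm ip (T x)" by (rule Re_ip_le_hnorm_mult)
  also have "\<dots> \<le> hnorm ip x * (opnorm ip T * hnorm ip x)"
    by (intro mult_left_mono hnorm_le_opnorm[OF assms] hnorm_nonneg)
  finally show ?thesis by (simp add: power2_eq_square algebra_simps)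
qed

lemma opnorm_ge_of_ip_self_ge:
  assumes "bounded_op sm ip T" and nontrivial: "\<exists>x::'h. x \<noteq> 0"
    and ge: "\<And>x. r * (hnorm ip x)^2 \<le> Re (ip x (T x))"
  shows "r \<le> opnorm ip T"
proof -
  obtain x0 :: 'h where "x0 \<noteq> 0" using nontrivial by blast
  have "r * (hnorm ip x0)^2 \<le> opnorm ip T * (hnorm ip x0)^2"
    using ge[of x0] ip_self_le_opnorm[OF assms(1), of x0] by linarith
  then show ?thesis using hnorm_pos[OF \<open>x0 \<noteq> 0\<close>] by simp
qed

text \<open>Cauchy-Schwarz for the form of \<open>T\<close>, applied to \<open>x\<close> and \<open>T x\<close>.\<close>
lemma pos_op_hnorm_sq_le:
  assumes T: "pos_op T" and le: "\<And>x. Re (ip x (T x)) \<le> r * (hnorm ip x)^2" and "0 \<le> r"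
  shows "(hnorm ip (T x))^2 \<le> r * Re (ip x (T x))"
proof -
  have "ip x (T (T x)) = ip (T x) (T x)"
    using T unfolding pos_op_def selfadjoint_def by metis
  then have "((hnorm ip (T x))^2)^2 = (cmod (ip x (T (T x))))^2"
    by (simp add: ip_self_eq_hnorm_sq norm_power)
  also have "\<dots> \<le> Re (ip x (T x)) * Re (ip (T x) (T (T x)))"
    by (rule cauchy_schwarz_pos_op[OF T])
  also have "\<dots> \<le> Re (ip x (T x)) * (r * (hnorm ip (T x))^2)"
    using T le unfolding pos_op_def by (intro mult_left_mono) auto
  finally have le_sq: "(hnorm ip (T x))^2 * (hnorm ip (T x))^2 \<le> (r * Re (ip x (T x))) * (hnorm ip (T x))^2"
    by (simp add: algebra_simps power2_eq_square)
  show ?thesis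
  proof (cases "hnorm ip (T x) = 0")
    case True
    then show ?thesis using T \<open>0 \<le> r\<close> unfolding pos_op_def by simp
  next
    case False
    then have "0 < (hnorm ip (T x))^2" by simp
    then show ?thesis by (rule mult_right_le_imp_le[OF le_sq])
  qed
qed

lemma pos_op_hnorm_le:
  assumes T: "pos_op T" and le: "\<And>x. Re (ip x (T x)) \<le> r * (hnorm ip x)^2" and "0 \<le> r"
  shows "hnorm ip (T x) \<le> r * hnorm ip x"
proof -
  have "(hnorm ip (T x))^2 \<le> r * Re (ip x (T x))" by (rule pos_op_hnorm_sq_le[OF assms])
  also have "\<dots> \<le> r * (r * (hnorm ip x)^2)" by (intro mult_left_mono le \<open>0 \<le> r\<close>)
  finally have "(hnorm ip (T x))^2 \<le> (r * hnorm ip x)^2" by (simp add: power2_eq_square algebra_simps)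
  then show ?thesis using \<open>0 \<le> r\<close> hnorm_nonneg by (meson mult_nonneg_nonneg power2_le_imp_le)
qed

lemma pos_opnorm_le:
  assumes "pos_op T" and "\<And>x. Re (ip x (T x)) \<le> r * (hnorm ip x)^2" and "0 \<le> r"
    and nontrivial: "\<exists>x::'h. x \<noteq> 0"
  shows "opnorm ip T \<le> r"
  by (rule opnorm_le_bound[OF pos_op_hnorm_le[OF assms(1-3)] nontrivial])

lemma pos_opnorm_le_shift:
  assumes "pos_op T" and near: "\<And>x. hnorm ip (T x - sm (of_real c) x) \<le> t * hnorm ip x"
    and "0 \<le> c + t" and nontrivial: "\<exists>x::'h. x \<noteq> 0"
  shows "opnorm ip T \<le> c + t"
proof (rule pos_opnorm_le[OF assms(1) _ assms(3) nontrivial])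
  fix x
  have "ip x (T x) = of_real (c * (hnorm ip x)^2) + ip x (T x - sm (of_real c) x)"
    by (simp add: ip_simps ip_self_eq_hnorm_sq)
  then have "Re (ip x (T x)) \<le> c * (hnorm ip x)^2 + hnorm ip x * hnorm ip (T x - sm (of_real c) x)"
    using Re_ip_le_hnorm_mult[of x "T x - sm (of_real c) x"] by simp
  also have "\<dots> \<le> c * (hnorm ip x)^2 + hnorm ip x * (t * hnorm ip x)"
    by (intro add_left_mono mult_left_mono near hnorm_nonneg)
  finally show "Re (ip x (T x)) \<le> (c + t) * (hnorm ip x)^2"
    by (simp add: power2_eq_square algebra_simps)
qed

text \<open>The proof only uses \<open>(T - m)\<^sup>2 \<le> (M - m)(T - m)\<close> and the fact that the resulting bound is affine in
  \<open>\<langle>x, (T - m) x\<rangle> \<in> [0, (M - m)\<parallel>x\<parallel>\<^sup>2]\<close>.\<close>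
lemma hnorm_sq_diff_scale_le:
  assumes T: "linop T" "selfadjoint ip T"
    and lower: "\<And>x. m * (hnorm ip x)^2 \<le> Re (ip x (T x))"
    and upper: "\<And>x. Re (ip x (T x)) \<le> M * (hnorm ip x)^2" and "m \<le> M"
  shows "(hnorm ip (T x - sm (of_real c) x))^2 \<le> max ((M - c)^2) ((m - c)^2) * (hnorm ip x)^2"
proof -
  define Q where "Q x = T x - sm (of_real m) x" for x
  define q where "q = Re (ip x (Q x))"
  have ip_Q: "Re (ip x (Q x)) = Re (ip x (T x)) - m * (hnorm ip x)^2" for x
    unfolding Q_def by (simp add: ip_simps hnorm_sq)
  have Q_sa: "selfadjoint ip Q"
    using T(2) unfolding Q_def selfadjoint_def by (simp add: ip_simps)
  have "linop Q" unfolding Q_def by (rule linop_diff_op[OF T(1) linop_scale_op])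
  then have "pos_op Q"
    unfolding pos_op_def using Q_sa lower by (simp add: ip_Q)
  then have "(hnorm ip (Q x))^2 \<le> (M - m) * q"
    unfolding q_def using upper \<open>m \<le> M\<close> by (intro pos_op_hnorm_sq_le) (simp_all add: ip_Q algebra_simps)
  moreover have "T x - sm (of_real c) x = Q x - sm (of_real (c - m)) x"
    unfolding Q_def by (simp add: scale_left_diff_distrib)
  ultimately have le: "(hnorm ip (T x - sm (of_real c) x))^2 \<le> (M + m - 2*c) * q + (m - c)^2 * (hnorm ip x)^2"
    using hnorm_sq_diff_scale[OF Q_sa, of x "c - m"] unfolding q_def
    by (simp add: algebra_simps power2_eq_square)
  have q_bounds: "0 \<le> q" "q \<le> (M - m) * (hnorm ip x)^2"
    using lower[of x] upper[of x] unfolding q_def ip_Q by (simp_all add: algebra_simps)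
  show ?thesis
  proof (cases "0 \<le> M + m - 2*c")
    case True
    then have "(M + m - 2*c) * q \<le> (M + m - 2*c) * ((M - m) * (hnorm ip x)^2)"
      using q_bounds by (intro mult_left_mono)
    then have "(hnorm ip (T x - sm (of_real c) x))^2 \<le> (M - c)^2 * (hnorm ip x)^2"
      using le by (simp add: algebra_simps power2_eq_square)
    then show ?thesis by (meson max.cobounded1 mult_right_mono order_trans zero_le_power2)
  next
    case False
    then have "(M + m - 2*c) * q \<le> 0" using q_bounds by (simp add: mult_nonpos_nonneg)
    then have "(hnorm ip (T x - sm (of_real c) x))^2 \<le> (m - c)^2 * (hnorm ip x)^2"
      using le by simp
    then show ?thesis by (meson max.cobounded2 mult_right_mono order_trans zero_le_power2)
  qed
qed

lemma bounded_op_id: "bounded_op sm ip (\<lambda>x. x)"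
  unfolding bounded_op_iff using linop_id by (auto intro: exI[of _ 1])

lemma bounded_op_scale: "bounded_op sm ip (\<lambda>x. sm c x)"
  unfolding bounded_op_iff using linop_scale_op hnorm_scale by auto

lemma opnorm_nonneg:
  assumes "bounded_op sm ip T"
  shows "0 \<le> opnorm ip T"
proof -
  obtain K where K: "\<And>x. hnorm ip (T x) \<le> K * hnorm ip x" and "linop T"
    using assms unfolding bounded_op_iff by blast
  have "hnorm ip (T 0) \<le> opnorm ip T" unfolding opnorm_def
  proof (intro cSup_upper bdd_aboveI[of _ "\<bar>K\<bar>"])
    fix z assume "z \<in> {hnorm ip (T x) |x. hnorm ip x \<le> 1}"
    then obtain x where "z = hnorm ip (T x)" "hnorm ip x \<le> 1" by blast
    moreover have "K * hnorm ip x \<le> \<bar>K\<bar>"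
      using \<open>hnorm ip x \<le> 1\<close> hnorm_nonneg[of x] by (smt (verit) mult_left_le mult_nonpos_nonneg)
    ultimately show "z \<le> \<bar>K\<bar>" using K[of x] by linarith
  qed auto
  then show ?thesis using linop_zero[OF \<open>linop T\<close>] by simp
qed

lemma bounded_op_comp:
  assumes "bounded_op sm ip S" "bounded_op sm ip T"
  shows "bounded_op sm ip (\<lambda>x. S (T x))"
  unfolding bounded_op_iff
proof
  show "linop (\<lambda>x. S (T x))" using assms linop_comp unfolding bounded_op_iff by blast
  have "hnorm ip (S (T x)) \<le> opnorm ip S * (opnorm ip T * hnorm ip x)" for x
    using hnorm_le_opnorm[OF assms(1), of "T x"] hnorm_le_opnorm[OF assms(2), of x]
      opnorm_nonneg[OF assms(1)] by (meson mult_left_mono order_trans)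
  then show "\<exists>K. \<forall>x. hnorm ip (S (T x)) \<le> K * hnorm ip x" by (metis mult.assoc)
qed

lemma bounded_op_diff:
  assumes "bounded_op sm ip S" "bounded_op sm ip T"
  shows "bounded_op sm ip (\<lambda>x. S x - T x)"
  unfolding bounded_op_iff
proof
  show "linop (\<lambda>x. S x - T x)" using assms linop_diff_op unfolding bounded_op_iff by blast
  have "hnorm ip (S x - T x) \<le> (opnorm ip S + opnorm ip T) * hnorm ip x" for x
    using hnorm_triangle_diff[of "S x" "T x"] hnorm_le_opnorm[OF assms(1), of x]
      hnorm_le_opnorm[OF assms(2), of x] by (simp add: algebra_simps)
  then show "\<exists>K. \<forall>x. hnorm ip (S x - T x) \<le> K * hnorm ip x" by blast
qed

lemma contraction_has_fixpoint:
  assumes complete: "hcomplete ip" and "k < 1"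
    and contraction: "\<And>x y. hnorm ip (F x - F y) \<le> k * hnorm ip (x - y)"
  obtains x where "F x = x"
proof -
  interpret M: Metric_space UNIV "\<lambda>x y. hnorm ip (x - y)"
    unfolding Metric_space_def
  proof (intro conjI allI impI)
    fix x y z :: 'h
    show "0 \<le> hnorm ip (x - y)" by (rule hnorm_nonneg)
    show "hnorm ip (x - y) = hnorm ip (y - x)" using hnorm_minus[of "x - y"] by simp
    show "hnorm ip (x - y) = 0 \<longleftrightarrow> x = y" by (simp add: hnorm_eq_0_iff)
    show "hnorm ip (x - z) \<le> hnorm ip (x - y) + hnorm ip (y - z)"
      using hnorm_triangle[of "x - y" "y - z"] by simp
  qed
  have "M.mcomplete"
    unfolding M.mcomplete_def
  proof (intro allI impI)
    fix X assume "M.MCauchy X"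
    then have "\<forall>e>0. \<exists>N. \<forall>m\<ge>N. \<forall>n\<ge>N. hnorm ip (X m - X n) < e"
      unfolding M.MCauchy_def by auto
    then obtain L where "\<forall>e>0. \<exists>N. \<forall>n\<ge>N. hnorm ip (X n - L) < e"
      using complete unfolding hcomplete_def by blast
    then show "\<exists>x. limitin M.mtopology X x sequentially"
      unfolding M.limit_metric_sequentially by auto
  qed
  then show ?thesis
    using M.Banach_fixedpoint_thm[of F k] \<open>k < 1\<close> contraction that by blast
qed

definition bounded_inverse :: "('h \<Rightarrow> 'h) \<Rightarrow> ('h \<Rightarrow> 'h) \<Rightarrow> bool" where
  "bounded_inverse T S \<longleftrightarrow> bounded_op sm ip S \<and> (\<forall>x. S (T x) = x) \<and> (\<forall>x. T (S x) = x)"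

lemma op_spectrum_iff:
  "l \<in> op_spectrum sm ip T \<longleftrightarrow> \<not> (\<exists>S. bounded_inverse (\<lambda>x. T x - sm l x) S)"
  unfolding op_spectrum_def bounded_inverse_def by blast

lemma bounded_inverse_of_bounded_below:
  assumes T: "linop T" "surj T" and "0 < c" and below: "\<And>x. c * hnorm ip x \<le> hnorm ip (T x)"
  shows "\<exists>S. bounded_inverse T S"
proof -
  have inj: "T x = T y \<Longrightarrow> x = y" for x y
    using below[of "x - y"] \<open>0 < c\<close> hnorm_nonneg[of "x - y"]
    by (simp add: linop_diff[OF T(1)] hnorm_eq_0_iff mult_le_0_iff)
  define S where "S = inv T"
  have TS: "T (S y) = y" for y unfolding S_def using T(2) by (simp add: surj_f_inv_f)
  have ST: "S (T x) = x" for x using TS inj by blast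
  have "linop S"
    unfolding linop_def using TS inj by (metis linop_add[OF T(1)] linop_scale[OF T(1)])
  moreover have "hnorm ip (S y) \<le> (1/c) * hnorm ip y" for y
    using below[of "S y"] \<open>0 < c\<close> by (simp add: TS field_simps)
  ultimately show ?thesis unfolding bounded_inverse_def bounded_op_iff using TS ST by blast
qed

text \<open>Solving \<open>s x - P x = z\<close> is finding a fixed point of the contraction \<open>x \<mapsto> (z + P x)/s\<close>.\<close>
lemma bounded_inverse_scale_minus:
  assumes complete: "hcomplete ip" and P: "bounded_op sm ip P" and "opnorm ip P < s"
  shows "\<exists>S. bounded_inverse (\<lambda>x. sm (of_real s) x - P x) S"
proof -
  define k where "k = opnorm ip P"
  have "0 \<le> k" "k < s" unfolding k_def using opnorm_nonneg[OF P] assms by auto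
  have P_le: "hnorm ip (P x) \<le> k * hnorm ip x" for x
    unfolding k_def by (rule hnorm_le_opnorm[OF P])
  have P_lin: "linop P" using P unfolding bounded_op_iff by blast
  let ?T = "\<lambda>x. sm (of_real s) x - P x"
  have "\<exists>x. ?T x = z" for z
  proof -
    define F where "F x = sm (of_real (1/s)) (z + P x)" for x
    have contraction: "hnorm ip (F x - F y) \<le> (k/s) * hnorm ip (x - y)" for x y
    proof -
      have "F x - F y = sm (of_real (1/s)) (P (x - y))"
        unfolding F_def by (simp add: linop_diff[OF P_lin] scale_right_diff_distrib scale_right_distrib)
      moreover have "cmod (of_real (1/s)) = 1/s" using \<open>k < s\<close> \<open>0 \<le> k\<close> by (simp only: norm_of_real) simp
      ultimately show ?thesis
        using P_le[of "x - y"] \<open>k < s\<close> \<open>0 \<le> k\<close>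
        by (simp only: hnorm_scale) (simp add: divide_right_mono)
    qed
    have "k/s < 1" using \<open>k < s\<close> \<open>0 \<le> k\<close> by simp
    then obtain x where "F x = x"
      using contraction_has_fixpoint[OF complete _ contraction] by blast
    then have "sm (of_real s) x = sm (of_real s) (F x)" by simp
    also have "\<dots> = z + P x" unfolding F_def using \<open>k < s\<close> \<open>0 \<le> k\<close> by simp
    finally show ?thesis by (metis add_diff_cancel)
  qed
  then have "surj ?T" by (metis surj_def)
  moreover have "(s - k) * hnorm ip x \<le> hnorm ip (?T x)" for x
  proof -
    have "hnorm ip (sm (of_real s) x) \<le> hnorm ip (?T x) + hnorm ip (P x)"
      using hnorm_triangle[of "?T x" "P x"] by simp
    then show ?thesis
      using P_le[of x] \<open>k < s\<close> \<open>0 \<le> k\<close> by (simp add: hnorm_scale algebra_simps)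
  qed
  ultimately show ?thesis
    using linop_diff_op[OF linop_scale_op P_lin] \<open>k < s\<close>
    by (intro bounded_inverse_of_bounded_below) auto
qed

text \<open>\<open>S\<close> commutes with \<open>B\<close> because it inverts \<open>B\<^sup>2\<close>, so \<open>B S\<close> is a two-sided inverse of \<open>B\<close>.\<close>
lemma bounded_inverse_of_square:
  assumes B: "bounded_op sm ip B" and S: "bounded_inverse (\<lambda>x. B (B x)) S"
  shows "bounded_inverse B (\<lambda>x. B (S x))"
proof -
  have SBB: "S (B (B x)) = x" and BBS: "B (B (S x)) = x" for x
    using S unfolding bounded_inverse_def by auto
  have "S (B x) = B (S x)" for x
    by (metis SBB BBS)
  then show ?thesis
    using bounded_op_comp[OF B] S SBB BBS unfolding bounded_inverse_def by metis
qed

lemma bounded_below_of_left_inverse: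
  assumes "bounded_op sm ip S" and left: "\<And>x. S (T x) = x"
  obtains K where "0 < K" and "\<And>x. hnorm ip x \<le> K * hnorm ip (T x)"
proof
  fix x
  have "hnorm ip x \<le> opnorm ip S * hnorm ip (T x)"
    using hnorm_le_opnorm[OF assms(1), of "T x"] by (simp add: left)
  also have "\<dots> \<le> (opnorm ip S + 1) * hnorm ip (T x)"
    by (intro mult_right_mono hnorm_nonneg) simp
  finally show "hnorm ip x \<le> (opnorm ip S + 1) * hnorm ip (T x)" .
qed (use opnorm_nonneg[OF assms(1)] in simp)

end

locale effect_space = complex_inner_space sm ip
  for sm :: "complex \<Rightarrow> 'h::ab_group_add \<Rightarrow> 'h" and ip +
  fixes A :: "'h \<Rightarrow> 'h"
  assumes effect: "effect sm ip A" and nontrivial: "\<exists>x::'h. x \<noteq> 0"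
begin

abbreviation A' :: "'h \<Rightarrow> 'h" where "A' \<equiv> \<lambda>x. x - A x"

abbreviation centered :: "'h \<Rightarrow> 'h" where "centered \<equiv> \<lambda>x. A x - sm (1/2) x"

lemma A_bounded: "bounded_op sm ip A"
  using effect unfolding effect_def by blast

lemma A_linop: "linop A"
  using A_bounded unfolding bounded_op_iff by blast

lemma A_selfadjoint: "selfadjoint ip A"
  using effect unfolding effect_def by blast

lemma A_pos: "pos_op A"
  using effect A_linop A_selfadjoint op_le_zero_iff_pos_op unfolding effect_def by blast

lemma A'_bounded: "bounded_op sm ip A'"
  by (rule bounded_op_diff[OF bounded_op_id A_bounded])

lemma A'_pos: "pos_op A'"
  using effect A_linop A_selfadjoint linop_diff_op[OF linop_id A_linop]
  unfolding effect_def op_le_def pos_op_def selfadjoint_def by (simp add: ip_simps)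

lemma A'_minus_half: "A' x - sm (1/2) x = - centered x"
proof -
  have "A' x - sm (1/2) x = (sm (1/2) x + sm (1/2) x) - A x - sm (1/2) x"
    by (simp add: scale_half_add)
  then show ?thesis by (simp add: algebra_simps)
qed

lemma centered_selfadjoint: "selfadjoint ip centered"
  using A_selfadjoint unfolding selfadjoint_def by (simp add: ip_simps)

lemma centered_square: "centered (centered x) = sm (1/4) x - A (A' x)"
proof -
  have "centered (centered x) = A (A x) - (sm (1/2) (A x) + sm (1/2) (A x)) + sm (1/4) x"
    by (simp add: linop_diff[OF A_linop] linop_scale[OF A_linop] scale_right_diff_distrib algebra_simps)
  then show ?thesis by (simp add: scale_half_add linop_diff[OF A_linop] algebra_simps)
qed

lemma ip_A_left: "ip (A x) y = ip x (A y)"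
  using A_selfadjoint unfolding selfadjoint_def by blast

lemma ip_AA': "ip x (A (A' x)) = of_real ((hnorm ip x)^2 / 4 - (hnorm ip (centered x))^2)"
proof -
  have "ip x (A (A' x)) = ip x (sm (1/4) x) - ip x (centered (centered x))"
    by (simp add: centered_square ip_diff_right)
  also have "ip x (centered (centered x)) = ip (centered x) (centered x)"
    using centered_selfadjoint unfolding selfadjoint_def by metis
  finally show ?thesis by (simp add: ip_scale_right ip_self_eq_hnorm_sq)
qed

lemma ip_I_minus_AA':
  "ip x (x - A (A' x)) = of_real (3/4 * (hnorm ip x)^2 + (hnorm ip (centered x))^2)"
  by (simp add: ip_diff_right ip_AA' ip_self_eq_hnorm_sq)

lemma hnorm_centered_sq_le_quarter: "(hnorm ip (centered x))^2 \<le> (hnorm ip x)^2 / 4"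
proof -
  have "0 * (hnorm ip y)^2 \<le> Re (ip y (A y))" "Re (ip y (A y)) \<le> 1 * (hnorm ip y)^2" for y
    using A_pos A'_pos unfolding pos_op_def by (simp_all add: ip_diff_right hnorm_sq)
  from hnorm_sq_diff_scale_le[OF A_linop A_selfadjoint this, where c = "1/2" and x = x] show ?thesis
    by (simp add: power2_eq_square)
qed

lemma AA'_pos: "pos_op (\<lambda>x. A (A' x))"
  unfolding pos_op_def selfadjoint_def
proof (intro conjI allI)
  show "linop (\<lambda>x. A (A' x))" by (rule linop_comp[OF A_linop linop_diff_op[OF linop_id A_linop]])
  show "ip (A (A' x)) y = ip x (A (A' y))" for x y
    by (simp add: linop_diff[OF A_linop] ip_simps ip_A_left)
  show "0 \<le> Re (ip x (A (A' x)))" for x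
    using hnorm_centered_sq_le_quarter[of x] by (simp add: ip_AA')
qed

lemma AA'_bounded: "bounded_op sm ip (\<lambda>x. A (A' x))"
  by (rule bounded_op_comp[OF A_bounded A'_bounded])

lemma I_minus_AA'_bounded: "bounded_op sm ip (\<lambda>x. x - A (A' x))"
  by (rule bounded_op_diff[OF bounded_op_id AA'_bounded])

lemma I_minus_AA'_pos: "pos_op (\<lambda>x. x - A (A' x))"
  unfolding pos_op_def
proof (intro conjI allI)
  show "linop (\<lambda>x. x - A (A' x))"
    using AA'_pos linop_diff_op[OF linop_id] unfolding pos_op_def by blast
  show "selfadjoint ip (\<lambda>x. x - A (A' x))"
    using AA'_pos unfolding pos_op_def selfadjoint_def by (simp add: ip_diff_left ip_diff_right)
  show "0 \<le> Re (ip x (x - A (A' x)))" for x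
    by (simp add: ip_I_minus_AA')
qed

lemma AA'_nonneg: "op_le ip (\<lambda>x. 0) (\<lambda>x. A (A' x))"
  using AA'_pos op_le_zero_iff_pos_op unfolding pos_op_def by blast

lemma AA'_le_quarter: "op_le ip (\<lambda>x. A (A' x)) (\<lambda>x. sm (1/4) x)"
  unfolding op_le_def by (simp add: ip_diff_right ip_scale_right ip_AA' ip_self_eq_hnorm_sq)

lemma opnorm_A_add_opnorm_A'_ge: "1 \<le> opnorm ip A + opnorm ip A'"
proof -
  obtain x :: 'h where "x \<noteq> 0" using nontrivial by blast
  have "(hnorm ip x)^2 = Re (ip x (A x)) + Re (ip x (A' x))" by (simp add: ip_diff_right hnorm_sq)
  also have "\<dots> \<le> (opnorm ip A + opnorm ip A') * (hnorm ip x)^2"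
    using ip_self_le_opnorm[OF A_bounded, of x] ip_self_le_opnorm[OF A'_bounded, of x]
    by (simp add: algebra_simps)
  finally show ?thesis using hnorm_pos[OF \<open>x \<noteq> 0\<close>] by simp
qed

abbreviation deviation :: real where
  "deviation \<equiv> max ((opnorm ip A - 1/2)^2) ((opnorm ip A' - 1/2)^2)"

text \<open>\<open>1 - \<parallel>A'\<parallel> \<le> A \<le> \<parallel>A\<parallel>\<close>, and \<open>(1 - \<parallel>A'\<parallel> - 1/2)\<^sup>2 = (\<parallel>A'\<parallel> - 1/2)\<^sup>2\<close>.\<close>
lemma hnorm_centered_sq_le: "(hnorm ip (centered x))^2 \<le> deviation * (hnorm ip x)^2"
proof -
  have lower: "(1 - opnorm ip A') * (hnorm ip y)^2 \<le> Re (ip y (A y))"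
    and upper: "Re (ip y (A y)) \<le> opnorm ip A * (hnorm ip y)^2" for y
    using ip_self_le_opnorm[OF A'_bounded, of y] ip_self_le_opnorm[OF A_bounded, of y]
    by (simp_all add: ip_diff_right hnorm_sq algebra_simps)
  have "1 - opnorm ip A' \<le> opnorm ip A" using opnorm_A_add_opnorm_A'_ge by simp
  from hnorm_sq_diff_scale_le[OF A_linop A_selfadjoint lower upper this, where c = "1/2" and x = x]
  show ?thesis by (simp add: power2_commute)
qed

lemma opnorm_AA'_le: "opnorm ip (\<lambda>x. A (A' x)) \<le> 1/4"
  by (rule pos_opnorm_le[OF AA'_pos _ _ nontrivial]) (simp_all add: ip_AA')

lemma opnorm_AA'_ge: "1/4 - deviation \<le> opnorm ip (\<lambda>x. A (A' x))"
  using hnorm_centered_sq_le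
  by (intro opnorm_ge_of_ip_self_ge[OF AA'_bounded nontrivial]) (simp add: ip_AA' algebra_simps)

lemma opnorm_I_minus_AA': "opnorm ip (\<lambda>x. x - A (A' x)) = 3/4 + deviation"
proof (rule antisym)
  show "opnorm ip (\<lambda>x. x - A (A' x)) \<le> 3/4 + deviation"
    using hnorm_centered_sq_le
    by (intro pos_opnorm_le[OF I_minus_AA'_pos _ _ nontrivial]) (simp_all add: ip_I_minus_AA' algebra_simps le_max_iff_disj)
next
  define t where "t = sqrt (opnorm ip (\<lambda>x. x - A (A' x)) - 3/4)"
  have "3/4 \<le> opnorm ip (\<lambda>x. x - A (A' x))"
    by (intro opnorm_ge_of_ip_self_ge[OF I_minus_AA'_bounded nontrivial]) (simp add: ip_I_minus_AA')
  then have "0 \<le> t" and t_sq: "t^2 = opnorm ip (\<lambda>x. x - A (A' x)) - 3/4"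
    unfolding t_def by simp_all
  have "(hnorm ip (centered x))^2 \<le> (t * hnorm ip x)^2" for x
    using ip_self_le_opnorm[OF I_minus_AA'_bounded, of x]
    by (simp add: ip_I_minus_AA' t_sq power_mult_distrib algebra_simps)
  then have centered_le: "hnorm ip (centered x) \<le> t * hnorm ip x" for x
    using \<open>0 \<le> t\<close> hnorm_nonneg by (meson mult_nonneg_nonneg power2_le_imp_le)
  have "opnorm ip A \<le> 1/2 + t"
    using centered_le \<open>0 \<le> t\<close> by (intro pos_opnorm_le_shift[OF A_pos _ _ nontrivial]) simp_all
  moreover have "opnorm ip A' \<le> 1/2 + t"
  proof (intro pos_opnorm_le_shift[OF A'_pos _ _ nontrivial])
    fix x
    have "hnorm ip (A' x - sm (of_real (1/2)) x) = hnorm ip (centered x)"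
      by (simp only: of_real_divide of_real_1 of_real_numeral A'_minus_half hnorm_minus)
    then show "hnorm ip (A' x - sm (of_real (1/2)) x) \<le> t * hnorm ip x"
      using centered_le[of x] by simp
  qed (use \<open>0 \<le> t\<close> in simp)
  ultimately have "\<bar>opnorm ip A - 1/2\<bar> \<le> t" "\<bar>opnorm ip A' - 1/2\<bar> \<le> t"
    using opnorm_A_add_opnorm_A'_ge by auto
  then have "deviation \<le> t^2"
    using \<open>0 \<le> t\<close> by (simp add: power2_le_iff_abs_le)
  then show "3/4 + deviation \<le> opnorm ip (\<lambda>x. x - A (A' x))"
    using t_sq by linarith
qed

lemma half_in_spectrum_iff:
  assumes complete: "hcomplete ip"
  shows "opnorm ip (\<lambda>x. A (A' x)) = 1/4 \<longleftrightarrow> (1/2 :: complex) \<in> op_spectrum sm ip A"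
proof
  assume norm: "opnorm ip (\<lambda>x. A (A' x)) = 1/4"
  show "(1/2 :: complex) \<in> op_spectrum sm ip A"
  proof (rule ccontr)
    assume "(1/2 :: complex) \<notin> op_spectrum sm ip A"
    then obtain S where "bounded_inverse centered S" unfolding op_spectrum_iff by blast
    then have S: "bounded_op sm ip S" "\<And>x. S (centered x) = x"
      unfolding bounded_inverse_def by auto
    obtain K where "0 < K" and below: "\<And>x. hnorm ip x \<le> K * hnorm ip (centered x)"
      using bounded_below_of_left_inverse[OF S] by blast
    define r where "r = max (1/4 - 1/K^2) 0"
    have "Re (ip x (A (A' x))) \<le> r * (hnorm ip x)^2" for x
    proof -
      have "(hnorm ip x)^2 \<le> (K * hnorm ip (centered x))^2"
        using below[of x] hnorm_nonneg by (simp add: power_mono)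
      then have "(hnorm ip x)^2 / K^2 \<le> (hnorm ip (centered x))^2"
        using \<open>0 < K\<close> by (simp add: field_simps power_mult_distrib)
      then have "Re (ip x (A (A' x))) \<le> (1/4 - 1/K^2) * (hnorm ip x)^2"
        by (simp add: ip_AA' algebra_simps)
      also have "\<dots> \<le> r * (hnorm ip x)^2" unfolding r_def by (simp add: mult_right_mono)
      finally show ?thesis .
    qed
    then have "opnorm ip (\<lambda>x. A (A' x)) \<le> r"
      by (rule pos_opnorm_le[OF AA'_pos _ _ nontrivial]) (simp add: r_def)
    moreover have "r < 1/4" unfolding r_def max_less_iff_conj using \<open>0 < K\<close> by simp
    ultimately show False using norm by simp
  qed
next
  assume half: "(1/2 :: complex) \<in> op_spectrum sm ip A"
  show "opnorm ip (\<lambda>x. A (A' x)) = 1/4"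
  proof (rule ccontr)
    assume "opnorm ip (\<lambda>x. A (A' x)) \<noteq> 1/4"
    then have "opnorm ip (\<lambda>x. A (A' x)) < 1/4" using opnorm_AA'_le by simp
    then obtain S where "bounded_inverse (\<lambda>x. sm (of_real (1/4)) x - A (A' x)) S"
      using bounded_inverse_scale_minus[OF complete AA'_bounded] by blast
    then have "bounded_inverse (\<lambda>x. centered (centered x)) S"
      by (simp only: centered_square of_real_divide of_real_1 of_real_numeral)
    then have "bounded_inverse centered (\<lambda>x. centered (S x))"
      by (rule bounded_inverse_of_square[OF bounded_op_diff[OF A_bounded bounded_op_scale]])
    then show False using half unfolding op_spectrum_iff by blast
  qed
qed

end

theorem mainTheorem7:
  fixes sm :: "complex \<Rightarrow> 'h::ab_group_add \<Rightarrow> 'h"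
    and ip :: "'h \<Rightarrow> 'h \<Rightarrow> complex"
    and A :: "'h \<Rightarrow> 'h"
  assumes H: "complex_separable_hilbert_space sm ip"
    and nontriv: "\<exists>x::'h. x \<noteq> 0"
    and eff: "effect sm ip A"
  defines "A' \<equiv> (\<lambda>x. x - A x)"
  shows "(op_le ip (\<lambda>x. 0) (\<lambda>x. A (A' x)) \<and> op_le ip (\<lambda>x. A (A' x)) (\<lambda>x. sm (1/4) x))
    \<and> (1/4 - max ((opnorm ip A - 1/2)\<^sup>2) ((opnorm ip A' - 1/2)\<^sup>2) \<le> opnorm ip (\<lambda>x. A (A' x))
         \<and> opnorm ip (\<lambda>x. A (A' x)) \<le> 1/4)
    \<and> (opnorm ip (\<lambda>x. A (A' x)) = 1/4 \<longleftrightarrow> (1/2 :: complex) \<in> op_spectrum sm ip A)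
    \<and> opnorm ip (\<lambda>x. x - A (A' x)) = 3/4 + max ((opnorm ip A - 1/2)\<^sup>2) ((opnorm ip A' - 1/2)\<^sup>2)"
proof -
  have "vector_space sm" "complex_inner_product sm ip" and complete: "hcomplete ip"
    using H unfolding complex_separable_hilbert_space_def by auto
  then interpret effect_space sm ip A
    using nontriv eff by (simp add: effect_space_def complex_inner_space_def effect_space_axioms_def)
  show ?thesis
    unfolding A'_def
    using AA'_nonneg AA'_le_quarter opnorm_AA'_ge opnorm_AA'_le half_in_spectrum_iff[OF complete]
      opnorm_I_minus_AA'
    by blast
qed

end
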